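(* Let $p$ be a prime and let $A$ be a Henselian valuation ring which is not a field, with field of fractions $K$ of characteristic $0$, maximal ideal $\mathfrak{m}_A$, residue field $k$ of characteristic $p$ and valuation $v_A$. Assume $K$ contains a primitive $p$-th root of unity $\zeta$; put $\mathfrak{z}=\zeta-1$, $e'=v_A(p)/(p-1)$. Let $L/K$ be a non-trivial Kummer extension of degree $p$. Then any $h\in A$ generating $L/K$ that satisfies one of the following properties is best (where $s,t\in\mathfrak{m}_A$, $u,c\in A^\times$, $\bar u\notin k^p$): (i) $p\nmid v_A(h)$; (ii) $h=u$; (iii) $h=1+ct$ with $0<v_A(t)<e'p$, $p\nmid v_A(t)$; (iv) $h=1+us^p$ with $0<v_A(s)<e'$; (v) $h=1+c\mathfrak{z}^p$ with $\bar c\notin\{x^p-x\mid x\in k\}$.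
   Context: An element $h\in K$ generates $L/K$ if $L=K(\alpha)$ with $\alpha^p=h$; any two generators satisfy $h'=h^ig^p$ with $g\in K^\times$, $1\le i\le p-1$. A generator $h$ is best if $v_A(h-1)=\sup_{g\in K^\times,\,1\le i\le p-1}v_A(h^ig^p-1)$. *)

theory Defs
  imports "HOL-Algebra.Algebra" "HOL-Library.Extended"
begin

text \<open>Setting: L is a field (HOL-Algebra record), K \<subseteq> carrier L a subfield,
  and v a (Krull) valuation on K with values in an ordered abelian group 'g,
  extended by a top element Pinf (= infinity) for v(0).\<close>

fun nsm :: "nat \<Rightarrow> 'g::monoid_add \<Rightarrow> 'g" where
  "nsm 0 x = 0"
| "nsm (Suc n) x = x + nsm n x"

definition valuation ::
  "('a, 'b) ring_scheme \<Rightarrow> 'a set \<Rightarrow> ('a \<Rightarrow> 'g::linordered_ab_group_add extended) \<Rightarrow> bool" where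
  "valuation L K v \<longleftrightarrow>
     (\<forall>x\<in>K. v x \<noteq> Minf) \<and>
     (\<forall>x\<in>K. v x = Pinf \<longleftrightarrow> x = \<zero>\<^bsub>L\<^esub>) \<and>
     (\<forall>x\<in>K. \<forall>y\<in>K. v (x \<otimes>\<^bsub>L\<^esub> y) = v x + v y) \<and>
     (\<forall>x\<in>K. \<forall>y\<in>K. min (v x) (v y) \<le> v (x \<oplus>\<^bsub>L\<^esub> y))"

definition val_ring :: "'a set \<Rightarrow> ('a \<Rightarrow> 'g::linordered_ab_group_add extended) \<Rightarrow> 'a set" where
  "val_ring K v = {x \<in> K. 0 \<le> v x}"

definition val_ideal :: "'a set \<Rightarrow> ('a \<Rightarrow> 'g::linordered_ab_group_add extended) \<Rightarrow> 'a set" where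
  "val_ideal K v = {x \<in> K. 0 < v x}"

definition val_units :: "'a set \<Rightarrow> ('a \<Rightarrow> 'g::linordered_ab_group_add extended) \<Rightarrow> 'a set" where
  "val_units K v = {x \<in> K. v x = 0}"

text \<open>Formal derivative of a polynomial in HOL-Algebra list representation
  (coefficients listed from the leading one down to the constant one).\<close>
definition formal_deriv :: "('a, 'b) ring_scheme \<Rightarrow> 'a list \<Rightarrow> 'a list" where
  "formal_deriv L f = map (\<lambda>j. add_pow L (length f - 1 - j) (f ! j)) [0..<length f - 1]"

definition henselian ::
  "('a, 'b) ring_scheme \<Rightarrow> 'a set \<Rightarrow> ('a \<Rightarrow> 'g::linordered_ab_group_add extended) \<Rightarrow> bool" where
  "henselian L K v \<longleftrightarrow>
     (\<forall>f a. f \<noteq> [] \<and> set f \<subseteq> val_ring K v \<and> hd f = \<one>\<^bsub>L\<^esub> \<and> a \<in> val_ring K v \<and>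
        ring.eval L f a \<in> val_ideal K v \<and>
        ring.eval L (formal_deriv L f) a \<in> val_units K v
      \<longrightarrow> (\<exists>b \<in> val_ring K v. ring.eval L f b = \<zero>\<^bsub>L\<^esub> \<and> b \<ominus>\<^bsub>L\<^esub> a \<in> val_ideal K v))"

definition val_p_divides ::
  "('a, 'b) ring_scheme \<Rightarrow> 'a set \<Rightarrow> ('a \<Rightarrow> 'g::linordered_ab_group_add extended) \<Rightarrow> nat \<Rightarrow> 'a \<Rightarrow> bool" where
  "val_p_divides L K v p x \<longleftrightarrow>
     (\<exists>g \<in> K - {\<zero>\<^bsub>L\<^esub>}. \<exists>\<gamma>. v g = Fin \<gamma> \<and> v x = Fin (nsm p \<gamma>))"

definition primitive_root :: "('a, 'b) ring_scheme \<Rightarrow> nat \<Rightarrow> 'a \<Rightarrow> bool" where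
  "primitive_root L p \<zeta> \<longleftrightarrow>
     \<zeta> [^]\<^bsub>L\<^esub> p = \<one>\<^bsub>L\<^esub> \<and> (\<forall>j::nat. 0 < j \<and> j < p \<longrightarrow> \<zeta> [^]\<^bsub>L\<^esub> j \<noteq> \<one>\<^bsub>L\<^esub>)"

definition generates :: "('a, 'b) ring_scheme \<Rightarrow> 'a set \<Rightarrow> nat \<Rightarrow> 'a \<Rightarrow> bool" where
  "generates L K p h \<longleftrightarrow> h \<in> K \<and>
     (\<exists>\<alpha> \<in> carrier L. \<alpha> [^]\<^bsub>L\<^esub> p = h \<and> generate_field L (insert \<alpha> K) = carrier L)"

definition best_gen_values ::
  "('a, 'b) ring_scheme \<Rightarrow> 'a set \<Rightarrow> ('a \<Rightarrow> 'g::linordered_ab_group_add extended) \<Rightarrow> nat \<Rightarrow> 'a \<Rightarrow> 'g extended set" where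
  "best_gen_values L K v p h =
     {v ((h [^]\<^bsub>L\<^esub> i) \<otimes>\<^bsub>L\<^esub> (g [^]\<^bsub>L\<^esub> p) \<ominus>\<^bsub>L\<^esub> \<one>\<^bsub>L\<^esub>) | g i.
        g \<in> K - {\<zero>\<^bsub>L\<^esub>} \<and> 1 \<le> i \<and> i \<le> p - 1}"

definition is_best ::
  "('a, 'b) ring_scheme \<Rightarrow> 'a set \<Rightarrow> ('a \<Rightarrow> 'g::linordered_ab_group_add extended) \<Rightarrow> nat \<Rightarrow> 'a \<Rightarrow> bool" where
  "is_best L K v p h \<longleftrightarrow>
     (let S = best_gen_values L K v p h; a = v (h \<ominus>\<^bsub>L\<^esub> \<one>\<^bsub>L\<^esub>) in
        (\<forall>x \<in> S. x \<le> a) \<and> (\<forall>b. (\<forall>x \<in> S. x \<le> b) \<longrightarrow> a \<le> b))"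

end

theory Submission
  imports Defs
begin

(* Taking i = 1 and g = 1 shows that h is best as soon as v(h^i g^p - 1) <= v(h - 1) for all
   g in K^x and all i prime to p.  In cases (i) and (ii) one has v(h - 1) = 0, and a unit
   h^i g^p congruent to 1 would make v(h) divisible by p, resp. h congruent to the p-th power
   (h^k g^a)^p, where a i + 1 = p k.  In cases (iii)-(v) write h = 1 + y with y in m_A; if
   v(h^i g^p - 1) > v(y), then g = 1 + eta with eta in m_A, and comparing
   h^i - 1 = y (i + y w) with g^p - 1 = eta^p + p eta (1 + eta w') gives, in (iii), either
   v(t) = p v(eta) or p v(p) <= (p - 1) v(t).  In (iv) and (v), h = 1 + c s^p with
   p s = s^p r, and dividing h^i g^p - 1 by s^p leaves i c + z^p + r z in m_A; rescaling z
   turns this into c = x^p + r x modulo m_A, where r lies in m_A in case (iv) and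
   r = -1 modulo m_A for s = zeta - 1 in case (v). *)


lemma nsm_add: "nsm (m + n) x = nsm m x + nsm n (x::'g::monoid_add)"
  by (induction m) (simp_all add: add.assoc)

lemma nsm_Suc_right: "nsm (Suc n) x = nsm n x + (x::'g::monoid_add)"
  using nsm_add[of n 1 x] by simp

lemma nsm_mult: "nsm (m * n) x = nsm m (nsm n (x::'g::monoid_add))"
  by (induction m) (simp_all add: nsm_add)

lemma nsm_add_distrib: "nsm n (x + y) = nsm n x + nsm n (y::'g::comm_monoid_add)"
  by (induction n) (simp_all add: algebra_simps)

lemma nsm_zero [simp]: "nsm n (0::'g::monoid_add) = 0"
  by (induction n) simp_all

lemma nsm_uminus: "nsm n (- x) = - nsm n (x::'g::ab_group_add)"
  by (induction n) (simp_all add: algebra_simps)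

lemma nsm_Fin: "nsm n (Fin x) = Fin (nsm n x)"
  by (induction n) (simp_all add: zero_extended_def)

lemma nsm_Pinf: "0 < n \<Longrightarrow> nsm n (Pinf::'g::linordered_ab_group_add extended) = Pinf"
proof (induction n)
  case (Suc n)
  then show ?case
    by (cases "n = 0") (simp_all add: zero_extended_def)
qed simp

lemma nsm_mono: "x \<le> y \<Longrightarrow> nsm n x \<le> nsm n (y::'g::ordered_ab_group_add)"
  by (induction n) (simp_all add: add_mono)

lemma nsm_strict_mono: "x < y \<Longrightarrow> 0 < n \<Longrightarrow> nsm n x < nsm n (y::'g::ordered_ab_group_add)"
proof (induction n)
  case (Suc n)
  then show ?case
    by (cases "n = 0") (simp_all add: add_less_le_mono less_imp_le nsm_mono)
qed simp

lemma nsm_eq_0_iff: "0 < n \<Longrightarrow> nsm n x = 0 \<longleftrightarrow> x = (0::'g::linordered_ab_group_add)"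
  using nsm_strict_mono[of x 0 n] nsm_strict_mono[of 0 x n] by (cases x "0::'g" rule: linorder_cases) auto

lemma nsm_Suc_le_if_min_le:
  fixes \<pi> \<eta> \<tau> :: "'g::ordered_ab_group_add"
  assumes "\<pi> + \<eta> \<le> nsm (Suc n) \<eta>" "\<pi> + \<eta> \<le> \<tau>"
  shows "nsm (Suc n) \<pi> \<le> nsm n \<tau>"
proof -
  have "\<pi> \<le> nsm n \<eta>"
    using assms(1) by (simp add: nsm_Suc_right)
  then have "nsm (Suc n) \<pi> \<le> nsm n \<pi> + nsm n \<eta>"
    by (simp add: nsm_Suc_right)
  also have "\<dots> \<le> nsm n \<tau>"
    using nsm_mono[OF assms(2), of n] by (simp add: nsm_add_distrib)
  finally show ?thesis .
qed

lemma nsm_eq_multiple_if_coprime: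
  fixes x y :: "'g::ab_group_add"
  assumes "a * i + 1 = p * k" and "nsm i x + nsm p y = 0"
  shows "x = nsm p (nsm k x + nsm a y)"
proof -
  have "nsm p (nsm k x) = nsm a (nsm i x) + x"
  proof -
    have "nsm p (nsm k x) = nsm (a * i + 1) x"
      by (simp only: assms(1) nsm_mult[symmetric])
    also have "\<dots> = nsm a (nsm i x) + x"
      by (simp add: nsm_add nsm_mult)
    finally show ?thesis .
  qed
  moreover have "nsm i x = - nsm p y"
    using assms(2) by (simp add: eq_neg_iff_add_eq_0)
  moreover have "nsm a (nsm p y) = nsm p (nsm a y)"
    by (simp only: nsm_mult[symmetric] mult.commute)
  ultimately show ?thesis
    by (simp add: nsm_add_distrib nsm_uminus)
qed

lemma exists_inverse_mod_prime:
  assumes "Factorial_Ring.prime (p::nat)" "\<not> p dvd i" obtains a k where "a * i + 1 = p * k"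
proof -
  have "i \<noteq> 0"
    using assms(2) by (metis dvd_0_right)
  moreover have "gcd i p = 1"
    using prime_imp_coprime[OF assms] by (simp add: coprime_iff_gcd_eq_1 gcd.commute)
  ultimately obtain x y where xy: "i * x = p * y + 1"
    using bezout_nat by metis
  obtain q where q: "p = Suc q"
    using prime_gt_0_nat[OF assms(1)] gr0_implies_Suc by blast
  have "x * q * i + 1 = q * (i * x) + 1"
    by (simp add: algebra_simps)
  also have "\<dots> = q * (p * y + 1) + 1"
    using xy by simp
  also have "\<dots> = p * (q * y + 1)"
    unfolding q by (simp add: algebra_simps)
  finally have "x * q * i + 1 = p * (q * y + 1)" .
  then show ?thesis
    using that by blast
qed

context cring
begin

abbreviation nat_elem :: "nat \<Rightarrow> 'a" where "nat_elem n \<equiv> add_pow R n \<one>"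

lemma nat_elem_closed: "nat_elem n \<in> carrier R"
  by simp

lemma nat_elem_add: "nat_elem (m + n) = nat_elem m \<oplus> nat_elem n"
  by (simp add: add.nat_pow_mult)

lemma nat_elem_mult: "nat_elem (m * n) = nat_elem m \<otimes> nat_elem n"
  by (simp add: add_pow_ldistr add.nat_pow_pow mult.commute)

lemma one_plus_minus_one [simp]: "x \<in> carrier R \<Longrightarrow> (\<one> \<oplus> x) \<ominus> \<one> = x"
  by algebra

lemma binomial_one_plus:
  assumes x: "x \<in> carrier R"
  shows "(\<one> \<oplus> x) [^] n = (\<Oplus>k\<in>{..n}. nat_elem (n choose k) \<otimes> x [^] k)"
proof (induction n)
  case 0
  then show ?case
    using x by (simp add: Pi_def)
next
  case (Suc n)
  let ?f = "\<lambda>n k. nat_elem (n choose k) \<otimes> x [^] k"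
  have f: "?f m \<in> I \<rightarrow> carrier R" for m I
    using x by (simp add: Pi_def)
  have f0: "?f m 0 = \<one>" for m
    using x by simp
  have "(\<Oplus>k\<in>{..Suc n}. ?f (Suc n) k) = (\<Oplus>k\<in>{..n}. ?f (Suc n) (Suc k)) \<oplus> \<one>"
    using finsum_Suc2[OF f, of "Suc n" n] by (simp only: f0)
  also have "(\<Oplus>k\<in>{..n}. ?f (Suc n) (Suc k)) = (\<Oplus>k\<in>{..n}. ?f n k \<otimes> x \<oplus> ?f n (Suc k))"
    using x by (intro finsum_cong) (simp_all add: Pi_def nat_elem_add l_distr m_assoc)
  also have "\<dots> = (\<Oplus>k\<in>{..n}. ?f n k) \<otimes> x \<oplus> (\<Oplus>k\<in>{..n}. ?f n (Suc k))"
    using x by (simp add: finsum_addf finsum_ldistr Pi_def)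
  finally have expand: "(\<Oplus>k\<in>{..Suc n}. ?f (Suc n) k)
      = (\<Oplus>k\<in>{..n}. ?f n k) \<otimes> x \<oplus> ((\<Oplus>k\<in>{..n}. ?f n (Suc k)) \<oplus> \<one>)"
    using x by (simp add: a_assoc Pi_def)
  have "(\<Oplus>k\<in>{..n}. ?f n (Suc k)) \<oplus> \<one> = (\<Oplus>k\<in>{..Suc n}. ?f n k)"
    using finsum_Suc2[OF f, of n n] by (simp only: f0)
  also have "\<dots> = (\<Oplus>k\<in>{..n}. ?f n k)"
    using finsum_Suc[OF f, of n n] x by (simp add: binomial_eq_0)
  finally show ?case
    using Suc x expand by (simp add: r_distr a_comm)
qed

lemma one_plus_pow_prime_expansion:
  assumes p: "Factorial_Ring.prime p" and x: "x \<in> carrier R"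
  shows "(\<one> \<oplus> x) [^] p \<ominus> \<one> = x [^] p \<oplus> nat_elem p \<otimes> x \<otimes>
           (\<one> \<oplus> x \<otimes> (\<Oplus>k\<in>{2..<p}. nat_elem ((p choose k) div p) \<otimes> x [^] (k - 2)))"
proof -
  let ?f = "\<lambda>k. nat_elem (p choose k) \<otimes> x [^] k"
  let ?g = "\<lambda>k. nat_elem ((p choose k) div p) \<otimes> x [^] (k - 2)"
  have p2: "2 \<le> p"
    using p prime_ge_2_nat by blast
  have f: "?f \<in> I \<rightarrow> carrier R" and g: "?g \<in> I \<rightarrow> carrier R" for I
    using x by (simp_all add: Pi_def)
  have middle: "?f k = nat_elem p \<otimes> x \<otimes> x \<otimes> ?g k" if "k \<in> {2..<p}" for k
  proof -
    have "p dvd (p choose k)"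
      using dvd_choose_prime[of k p] that p by auto
    then have "nat_elem (p choose k) = nat_elem p \<otimes> nat_elem ((p choose k) div p)"
      by (simp add: nat_elem_mult[symmetric])
    moreover have "2 + (k - 2) = k"
      using that by auto
    then have "x [^] k = x [^] (2::nat) \<otimes> x [^] (k - 2)"
      using nat_pow_mult[OF x, of 2 "k - 2"] by (simp only:)
    then have "x [^] k = x \<otimes> x \<otimes> x [^] (k - 2)"
      using x by (simp add: numeral_2_eq_2)
    ultimately show ?thesis
      using x by (simp add: m_ac)
  qed
  have "{..p} = insert 0 (insert 1 (insert p {2..<p}))"
    using p2 by auto
  then have "(\<one> \<oplus> x) [^] p = ?f 0 \<oplus> (?f 1 \<oplus> (?f p \<oplus> (\<Oplus>k\<in>{2..<p}. ?f k)))"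
    using binomial_one_plus[OF x, of p] p2 x by (simp add: finsum_insert[OF _ _ f] Pi_def)
  also have "(\<Oplus>k\<in>{2..<p}. ?f k) = (\<Oplus>k\<in>{2..<p}. nat_elem p \<otimes> x \<otimes> x \<otimes> ?g k)"
    using middle x by (intro finsum_cong) (simp_all add: Pi_def)
  also have "\<dots> = nat_elem p \<otimes> x \<otimes> x \<otimes> (\<Oplus>k\<in>{2..<p}. ?g k)"
    using x by (simp add: finsum_rdistr Pi_def)
  finally have "(\<one> \<oplus> x) [^] p = \<one> \<oplus> (nat_elem p \<otimes> x \<oplus>
      (x [^] p \<oplus> nat_elem p \<otimes> x \<otimes> x \<otimes> (\<Oplus>k\<in>{2..<p}. ?g k)))"
    using x by simp
  moreover have "\<one> \<oplus> (c \<otimes> x \<oplus> (y \<oplus> c \<otimes> x \<otimes> x \<otimes> w)) \<ominus> \<one> = y \<oplus> c \<otimes> x \<otimes> (\<one> \<oplus> x \<otimes> w)"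
    if "c \<in> carrier R" "y \<in> carrier R" "w \<in> carrier R" for c y w
    using that x by algebra
  ultimately show ?thesis
    using x finsum_closed[OF g] by simp
qed

end

locale valued_subfield = field L for L :: "('a, 'b) ring_scheme" (structure) +
  fixes K :: "'a set" and v :: "'a \<Rightarrow> 'g::linordered_ab_group_add extended"
  assumes subfield_K: "subfield K L" and valuation_v: "valuation L K v"
begin

abbreviation A :: "'a set" where "A \<equiv> val_ring K v"

abbreviation M :: "'a set" where "M \<equiv> val_ideal K v"

lemma K_subset_carrier: "x \<in> K \<Longrightarrow> x \<in> carrier L"
  using subfieldE(3)[OF subfield_K] by auto

lemma K_closed [simp]:
  "\<zero> \<in> K" "\<one> \<in> K" "x \<in> K \<Longrightarrow> \<ominus> x \<in> K"
  "x \<in> K \<Longrightarrow> y \<in> K \<Longrightarrow> x \<oplus> y \<in> K" "x \<in> K \<Longrightarrow> y \<in> K \<Longrightarrow> x \<otimes> y \<in> K"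
  using subringE(2,3,5,6,7)[OF subfieldE(1)[OF subfield_K]] by auto

lemma K_minus_closed [simp]: "x \<in> K \<Longrightarrow> y \<in> K \<Longrightarrow> x \<ominus> y \<in> K"
  by (simp add: a_minus_def)

lemma K_pow_closed [simp]: "x \<in> K \<Longrightarrow> x [^] (n::nat) \<in> K"
  by (induction n) simp_all

lemma K_nat_elem [simp]: "nat_elem n \<in> K"
  by (induction n) (simp_all add: add.nat_pow_Suc)

lemma K_inv_closed: "x \<in> K \<Longrightarrow> x \<noteq> \<zero> \<Longrightarrow> inv x \<in> K \<and> x \<otimes> inv x = \<one>"
  using subfield_m_inv(1,2)[OF subfield_K] by auto

lemma v_mult: "x \<in> K \<Longrightarrow> y \<in> K \<Longrightarrow> v (x \<otimes> y) = v x + v y"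
  using valuation_v unfolding valuation_def by auto

lemma v_add: "x \<in> K \<Longrightarrow> y \<in> K \<Longrightarrow> min (v x) (v y) \<le> v (x \<oplus> y)"
  using valuation_v unfolding valuation_def by auto

lemma v_eq_Pinf_iff: "x \<in> K \<Longrightarrow> v x = Pinf \<longleftrightarrow> x = \<zero>"
  using valuation_v unfolding valuation_def by auto

lemma v_zero [simp]: "v \<zero> = Pinf"
  using v_eq_Pinf_iff[of \<zero>] by simp

lemma v_finite: assumes "x \<in> K" "x \<noteq> \<zero>" obtains a where "v x = Fin a"
  using assms valuation_v v_eq_Pinf_iff unfolding valuation_def by (cases "v x") auto

lemma v_eq_0_if_square_eq_one:
  assumes "x \<in> K" "x \<otimes> x = \<one>" shows "v x = 0"
proof -
  have "x \<noteq> \<zero>"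
    using assms by auto
  then obtain a where a: "v x = Fin a"
    using v_finite assms(1) by blast
  have "v x + v x = v \<one>" and "v \<one> + v \<one> = v \<one>"
    using v_mult[of x x] v_mult[of \<one> \<one>] assms by simp_all
  moreover obtain b where "v \<one> = Fin b"
    using v_finite[of \<one>] by auto
  ultimately show ?thesis
    using a by (simp add: zero_extended_def)
qed

lemma v_one [simp]: "v \<one> = 0"
  by (rule v_eq_0_if_square_eq_one) simp_all

lemma v_uminus [simp]: "x \<in> K \<Longrightarrow> v (\<ominus> x) = v x"
proof -
  assume x: "x \<in> K"
  have "v (\<ominus> \<one>) = 0"
    by (rule v_eq_0_if_square_eq_one) (simp_all add: l_minus)
  moreover have "\<ominus> x = \<ominus> \<one> \<otimes> x"
    using x K_subset_carrier by (simp add: l_minus)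
  ultimately show ?thesis
    using v_mult[of "\<ominus> \<one>" x] x by simp
qed

lemma v_add_eq_left: assumes "x \<in> K" "y \<in> K" "v x < v y" shows "v (x \<oplus> y) = v x"
proof -
  have "x = (x \<oplus> y) \<oplus> \<ominus> y"
    using assms K_subset_carrier by (simp add: add.m_assoc r_neg)
  then have "min (v (x \<oplus> y)) (v y) \<le> v x"
    using v_add[of "x \<oplus> y" "\<ominus> y"] assms by simp
  then show ?thesis
    using v_add[of x y] assms by (auto simp: min_def split: if_splits)
qed

lemma v_add_eq_right: "x \<in> K \<Longrightarrow> y \<in> K \<Longrightarrow> v y < v x \<Longrightarrow> v (x \<oplus> y) = v y"
  using v_add_eq_left[of y x] K_subset_carrier by (simp add: add.m_comm)

lemma v_eq_if_v_add_greater: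
  assumes "x \<in> K" "y \<in> K" "v x < v (x \<oplus> y)" shows "v y = v x"
  using v_add_eq_left[of x y] v_add_eq_right[of x y] assms by (cases "v x" "v y" rule: linorder_cases) auto

lemma v_pow: "x \<in> K \<Longrightarrow> v (x [^] (n::nat)) = nsm n (v x)"
  by (induction n) (simp_all add: v_mult add.commute)

lemma K_pow_nonzero: assumes "x \<in> K" "x \<noteq> \<zero>" shows "x [^] (n::nat) \<noteq> \<zero>"
proof -
  obtain a where "v x = Fin a"
    using v_finite assms by blast
  then show ?thesis
    using v_pow[OF assms(1), of n] by (auto simp: nsm_Fin)
qed

lemma v_inv: assumes "x \<in> K" "x \<noteq> \<zero>" "v x = Fin a" shows "v (inv x) = Fin (- a)"
proof -
  have x': "inv x \<in> K" "x \<otimes> inv x = \<one>"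
    using K_inv_closed assms by auto
  then have "inv x \<noteq> \<zero>"
    using assms K_subset_carrier by auto
  then obtain b where "v (inv x) = Fin b"
    using x' by (metis v_finite)
  moreover have "v x + v (inv x) = 0"
    using v_mult[of x "inv x"] x' assms by simp
  ultimately show ?thesis
    using assms(3) by (simp add: zero_extended_def eq_neg_iff_add_eq_0 add.commute)
qed

lemma val_ring_iff: "x \<in> A \<longleftrightarrow> x \<in> K \<and> 0 \<le> v x"
  by (simp add: val_ring_def)

lemma val_ideal_iff: "x \<in> M \<longleftrightarrow> x \<in> K \<and> 0 < v x"
  by (simp add: val_ideal_def)

lemma val_ring_subset_carrier: "x \<in> A \<Longrightarrow> x \<in> carrier L"
  by (simp add: val_ring_iff K_subset_carrier)

lemma val_ideal_subset_val_ring: "x \<in> M \<Longrightarrow> x \<in> A"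
  by (simp add: val_ideal_iff val_ring_iff less_imp_le)

lemma val_ring_add: "x \<in> A \<Longrightarrow> y \<in> A \<Longrightarrow> x \<oplus> y \<in> A"
  using v_add[of x y] by (auto simp: val_ring_iff min_def split: if_splits)

lemma val_ring_mult: "x \<in> A \<Longrightarrow> y \<in> A \<Longrightarrow> x \<otimes> y \<in> A"
  using v_mult[of x y] add_mono[of 0 "v x" 0 "v y"] by (simp add: val_ring_iff)

lemma val_ring_uminus: "x \<in> A \<Longrightarrow> \<ominus> x \<in> A"
  by (simp add: val_ring_iff)

lemma val_ring_minus: "x \<in> A \<Longrightarrow> y \<in> A \<Longrightarrow> x \<ominus> y \<in> A"
  by (simp add: a_minus_def val_ring_add val_ring_uminus)

lemma val_ring_one: "\<one> \<in> A"
  by (simp add: val_ring_iff)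

lemma val_ring_zero: "\<zero> \<in> A"
  by (simp add: val_ring_iff)

lemma val_ring_pow: "x \<in> A \<Longrightarrow> x [^] (n::nat) \<in> A"
  by (induction n) (simp_all add: val_ring_one val_ring_mult)

lemma val_ring_nat: "nat_elem n \<in> A"
  by (induction n) (simp_all add: val_ring_zero val_ring_one val_ring_add add.nat_pow_Suc)

lemmas val_ring_closed [simp] = val_ring_zero val_ring_one val_ring_nat val_ring_uminus
  val_ring_pow val_ring_add val_ring_mult val_ring_minus

lemma val_ideal_zero [simp]: "\<zero> \<in> M"
  by (simp add: val_ideal_iff zero_extended_def)

lemma val_ideal_add: "x \<in> M \<Longrightarrow> y \<in> M \<Longrightarrow> x \<oplus> y \<in> M"
  using v_add[of x y] by (auto simp: val_ideal_iff min_def split: if_splits)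

lemma val_ideal_uminus: "x \<in> M \<Longrightarrow> \<ominus> x \<in> M"
  by (simp add: val_ideal_iff)

lemma val_ideal_minus: "x \<in> M \<Longrightarrow> y \<in> M \<Longrightarrow> x \<ominus> y \<in> M"
  by (simp add: a_minus_def val_ideal_add val_ideal_uminus)

lemma val_ideal_mult_left: "a \<in> A \<Longrightarrow> x \<in> M \<Longrightarrow> a \<otimes> x \<in> M"
  using v_mult[of a x] by (cases "v a"; cases "v x") (auto simp: val_ring_iff val_ideal_iff zero_extended_def add_nonneg_pos)

lemma val_ideal_mult_right: "x \<in> M \<Longrightarrow> a \<in> A \<Longrightarrow> x \<otimes> a \<in> M"
  using val_ideal_mult_left[of a x] by (simp add: m_comm val_ring_subset_carrier val_ideal_subset_val_ring)

lemmas val_ideal_closed = val_ideal_add val_ideal_uminus val_ideal_minus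
  val_ideal_mult_left val_ideal_mult_right

lemma val_ideal_pow: "x \<in> M \<Longrightarrow> 0 < n \<Longrightarrow> x [^] (n::nat) \<in> M"
  using val_ideal_mult_left[of "x [^] (n - 1)" x] val_ideal_subset_val_ring
  by (cases n) (simp_all add: nat_pow_Suc)

lemma val_ideal_if_pow: assumes "x \<in> A" "0 < n" "x [^] (n::nat) \<in> M" shows "x \<in> M"
proof (cases "x = \<zero>")
  case False
  then obtain a where a: "v x = Fin a"
    using assms(1) v_finite by (auto simp: val_ring_iff)
  have "0 < nsm n (v x)"
    using assms v_pow[of x n] by (simp add: val_ring_iff val_ideal_iff)
  then show ?thesis
    using assms a nsm_mono[of a 0 n] by (force simp: val_ring_iff val_ideal_iff nsm_Fin zero_extended_def)
qed (simp add: val_ideal_iff zero_extended_def)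

lemma val_ideal_iff_v_less: "x \<in> A \<Longrightarrow> x \<in> M \<longleftrightarrow> v x \<noteq> 0"
  by (auto simp: val_ring_iff val_ideal_iff)

lemma v_one_plus_val_ideal: "m \<in> M \<Longrightarrow> v (\<one> \<oplus> m) = 0"
  using v_add_eq_left[of \<one> m] by (simp add: val_ideal_iff)

lemma v_mult_val_ring: "x \<in> K \<Longrightarrow> a \<in> A \<Longrightarrow> v x \<le> v (x \<otimes> a)"
  using v_mult[of x a] add_left_mono[of 0 "v a" "v x"] by (simp add: val_ring_iff)

lemma val_ring_if_v_mult_le:
  assumes "x \<in> K" "x \<noteq> \<zero>" "y \<in> K" "v x \<le> v (x \<otimes> y)" shows "y \<in> A"
proof -
  obtain a where "v x = Fin a"
    using v_finite assms by blast
  then show ?thesis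
    using assms v_mult[of x y] by (cases "v y") (auto simp: val_ring_iff zero_extended_def)
qed

lemma val_ideal_if_v_mult_less:
  assumes "x \<in> K" "x \<noteq> \<zero>" "y \<in> K" "v x < v (x \<otimes> y)" shows "y \<in> M"
proof -
  obtain a where "v x = Fin a"
    using v_finite assms by blast
  then show ?thesis
    using assms v_mult[of x y] by (cases "v y") (auto simp: val_ideal_iff zero_extended_def)
qed

lemma val_ring_finsum: "finite I \<Longrightarrow> (\<And>i. i \<in> I \<Longrightarrow> f i \<in> A) \<Longrightarrow> finsum L f I \<in> A"
proof (induction I rule: finite_induct)
  case (insert i I)
  then show ?case
    using val_ring_subset_carrier by (simp add: finsum_insert Pi_def)
qed simp

lemma one_plus_pow_minus_one:
  assumes x: "x \<in> A" shows "\<exists>w\<in>A. (\<one> \<oplus> x) [^] n \<ominus> \<one> = x \<otimes> (nat_elem n \<oplus> x \<otimes> w)"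
proof (induction n)
  case 0
  show ?case
    using val_ring_subset_carrier[OF x] by (intro bexI[of _ \<zero>]) (simp_all add: a_minus_def r_neg)
next
  case (Suc n)
  then obtain w where w: "w \<in> A" "(\<one> \<oplus> x) [^] n \<ominus> \<one> = x \<otimes> (nat_elem n \<oplus> x \<otimes> w)"
    by blast
  have xw: "x \<in> carrier L" "w \<in> carrier L"
    using x w(1) val_ring_subset_carrier by auto
  have pow: "(\<one> \<oplus> x) [^] n \<in> carrier L" "nat_elem n \<in> carrier L"
    using xw by simp_all
  have "(\<one> \<oplus> x) [^] Suc n \<ominus> \<one> = ((\<one> \<oplus> x) [^] n \<ominus> \<one>) \<otimes> (\<one> \<oplus> x) \<oplus> x"
    using xw pow by (simp only: nat_pow_Suc) algebra
  also have "\<dots> = x \<otimes> (nat_elem (Suc n) \<oplus> x \<otimes> (w \<oplus> nat_elem n \<oplus> x \<otimes> w))"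
    unfolding w(2) using xw pow(2) by (simp only: add.nat_pow_Suc) algebra
  finally show ?case
    using x w(1) by (intro bexI[of _ "w \<oplus> nat_elem n \<oplus> x \<otimes> w"]) simp_all
qed

lemma one_plus_pow_prime_minus_one:
  assumes p: "Factorial_Ring.prime p" and x: "x \<in> A"
  shows "\<exists>w\<in>A. (\<one> \<oplus> x) [^] p \<ominus> \<one> = x [^] p \<oplus> nat_elem p \<otimes> x \<otimes> (\<one> \<oplus> x \<otimes> w)"
proof -
  define w where "w = (\<Oplus>k\<in>{2..<p}. nat_elem ((p choose k) div p) \<otimes> x [^] (k - 2))"
  have "w \<in> A"
    unfolding w_def using x by (intro val_ring_finsum) simp_all
  moreover have "(\<one> \<oplus> x) [^] p \<ominus> \<one> = x [^] p \<oplus> nat_elem p \<otimes> x \<otimes> (\<one> \<oplus> x \<otimes> w)"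
    unfolding one_plus_pow_prime_expansion[OF p val_ring_subset_carrier[OF x]] w_def[symmetric] ..
  ultimately show ?thesis
    by blast
qed

lemma pow_minus_one_in_val_ideal:
  assumes "y \<in> A" "y \<ominus> \<one> \<in> M" shows "y [^] (n::nat) \<ominus> \<one> \<in> M"
proof -
  have y: "y = \<one> \<oplus> (y \<ominus> \<one>)"
    using val_ring_subset_carrier[OF assms(1)] by algebra
  obtain w where "w \<in> A" "(\<one> \<oplus> (y \<ominus> \<one>)) [^] n \<ominus> \<one> = (y \<ominus> \<one>) \<otimes> (nat_elem n \<oplus> (y \<ominus> \<one>) \<otimes> w)"
    using one_plus_pow_minus_one[of "y \<ominus> \<one>" n] assms by auto
  then show ?thesis
    using assms y by (metis val_ideal_mult_right val_ring_closed)
qed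

lemma v_minus_one_le_zero: assumes "y \<in> K" "v y \<noteq> 0" shows "v (y \<ominus> \<one>) \<le> 0"
proof (cases "v y < 0")
  case True
  then show ?thesis
    using v_add_eq_left[of y "\<ominus> \<one>"] assms by (simp add: a_minus_def)
next
  case False
  then show ?thesis
    using v_add_eq_right[of y "\<ominus> \<one>"] assms by (simp add: a_minus_def)
qed

lemma v_eq_0_if_minus_one_in_val_ideal:
  assumes "y \<in> K" "y \<ominus> \<one> \<in> M" shows "v y = 0"
proof -
  have "y = \<one> \<oplus> (y \<ominus> \<one>)"
    using K_subset_carrier[OF assms(1)] by algebra
  then show ?thesis
    using v_one_plus_val_ideal[OF assms(2)] by simp
qed

lemma inv_one_plus_val_ideal:
  assumes m: "m \<in> M"
  obtains u where "u \<in> A" "u \<otimes> (\<one> \<oplus> m) = \<one>" "u \<ominus> \<one> \<in> M"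
proof -
  have mK: "m \<in> K" and e: "\<one> \<oplus> m \<in> K" "v (\<one> \<oplus> m) = 0"
    using m v_one_plus_val_ideal by (simp_all add: val_ideal_iff)
  then have "\<one> \<oplus> m \<noteq> \<zero>"
    by (auto simp: zero_extended_def)
  then have u: "inv (\<one> \<oplus> m) \<in> K" "(\<one> \<oplus> m) \<otimes> inv (\<one> \<oplus> m) = \<one>"
    and vu: "v (inv (\<one> \<oplus> m)) = 0"
    using K_inv_closed[OF e(1)] v_inv[OF e(1), of 0] e(2) by (auto simp: zero_extended_def)
  have carrier: "m \<in> carrier L" "inv (\<one> \<oplus> m) \<in> carrier L"
    using mK u(1) K_subset_carrier by simp_all
  have "inv (\<one> \<oplus> m) \<ominus> \<one> = \<ominus> (inv (\<one> \<oplus> m) \<otimes> m) \<oplus> (inv (\<one> \<oplus> m) \<otimes> (\<one> \<oplus> m) \<ominus> \<one>)"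
    using carrier by algebra
  also have "\<dots> = \<ominus> (inv (\<one> \<oplus> m) \<otimes> m)"
    using u carrier by (simp add: m_comm a_minus_def r_neg)
  finally have "inv (\<one> \<oplus> m) \<ominus> \<one> \<in> M"
    using u(1) vu m by (simp add: val_ring_iff val_ideal_closed)
  moreover have "inv (\<one> \<oplus> m) \<otimes> (\<one> \<oplus> m) = \<one>"
    using u(2) carrier by (simp add: m_comm)
  moreover have "inv (\<one> \<oplus> m) \<in> A"
    using u(1) vu by (simp add: val_ring_iff)
  ultimately show ?thesis
    using that by blast
qed

lemma is_bestI:
  assumes p: "2 \<le> p" and h: "h \<in> K"
    and bound: "\<And>g i. g \<in> K \<Longrightarrow> g \<noteq> \<zero> \<Longrightarrow> \<not> p dvd i \<Longrightarrow> v (h [^] i \<otimes> g [^] p \<ominus> \<one>) \<le> v (h \<ominus> \<one>)"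
  shows "is_best L K v p h"
proof -
  have "v (h \<ominus> \<one>) \<in> best_gen_values L K v p h"
    unfolding best_gen_values_def using p h K_subset_carrier
    by (intro CollectI exI[of _ \<one>] exI[of _ "1::nat"]) auto
  moreover have "x \<le> v (h \<ominus> \<one>)" if x: "x \<in> best_gen_values L K v p h" for x
  proof -
    obtain g i where "x = v (h [^] i \<otimes> g [^] p \<ominus> \<one>)" "g \<in> K" "g \<noteq> \<zero>" "1 \<le> i" "i \<le> p - 1"
      using x unfolding best_gen_values_def by blast
    moreover have "\<not> p dvd i"
      using dvd_imp_le[of p i] calculation(4,5) p by auto
    ultimately show ?thesis
      using bound by blast
  qed
  ultimately show ?thesis
    unfolding is_best_def Let_def by blast
qed

end

locale mixed_char_valued_subfield = valued_subfield +
  fixes p :: nat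
  assumes prime_p: "Factorial_Ring.prime p"
    and char_0: "\<forall>n::nat. 0 < n \<longrightarrow> nat_elem n \<noteq> \<zero>"
    and residue_char_p: "\<forall>n::nat. nat_elem n \<in> M \<longleftrightarrow> p dvd n"
begin

lemma two_le_p: "2 \<le> p"
  using prime_p prime_ge_2_nat by blast

lemma v_nat_elem_not_dvd: "\<not> p dvd n \<Longrightarrow> v (nat_elem n) = 0"
  using residue_char_p val_ideal_iff_v_less[of "nat_elem n"] by simp

lemma nat_elem_p_in_val_ideal: "nat_elem p \<in> M"
  using residue_char_p by simp

lemma v_p: obtains \<pi> where "v (nat_elem p) = Fin \<pi>" "0 < \<pi>"
proof -
  have "nat_elem p \<noteq> \<zero>"
    using char_0 two_le_p by simp
  then obtain \<pi> where "v (nat_elem p) = Fin \<pi>"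
    using v_finite[of "nat_elem p"] by auto
  then show ?thesis
    using that nat_elem_p_in_val_ideal by (auto simp: val_ideal_iff zero_extended_def)
qed

lemma pow_p_minus_one_expansion:
  assumes "g \<in> A"
  obtains w where "w \<in> A"
    "g [^] p \<ominus> \<one> = (g \<ominus> \<one>) [^] p \<oplus> nat_elem p \<otimes> (g \<ominus> \<one>) \<otimes> (\<one> \<oplus> (g \<ominus> \<one>) \<otimes> w)"
proof -
  have "\<one> \<oplus> (g \<ominus> \<one>) = g"
    using val_ring_subset_carrier[OF assms] by algebra
  then show ?thesis
    using one_plus_pow_prime_minus_one[OF prime_p, of "g \<ominus> \<one>"] assms that by auto
qed

lemma v_pow_p_plus_p_multiple:
  fixes \<eta> \<pi>
  assumes y: "y \<in> K" "v y = Fin \<eta>" and e: "e \<in> K" "v e = 0" and \<pi>: "v (nat_elem p) = Fin \<pi>"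
  shows "nsm p \<eta> < \<pi> + \<eta> \<Longrightarrow> v (y [^] p \<oplus> nat_elem p \<otimes> y \<otimes> e) = Fin (nsm p \<eta>)"
    and "\<pi> + \<eta> \<le> nsm p \<eta> \<Longrightarrow> Fin (\<pi> + \<eta>) \<le> v (y [^] p \<oplus> nat_elem p \<otimes> y \<otimes> e)"
proof -
  have vyp: "v (y [^] p) = Fin (nsm p \<eta>)"
    using v_pow[OF y(1)] y(2) by (simp add: nsm_Fin)
  have vpye: "v (nat_elem p \<otimes> y \<otimes> e) = Fin (\<pi> + \<eta>)"
    using v_mult[of "nat_elem p \<otimes> y" e] v_mult[of "nat_elem p" y] \<pi> y e by simp
  show "nsm p \<eta> < \<pi> + \<eta> \<Longrightarrow> v (y [^] p \<oplus> nat_elem p \<otimes> y \<otimes> e) = Fin (nsm p \<eta>)"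
    using v_add_eq_left[of "y [^] p" "nat_elem p \<otimes> y \<otimes> e"] vyp vpye y e by simp
  show "Fin (\<pi> + \<eta>) \<le> v (y [^] p \<oplus> nat_elem p \<otimes> y \<otimes> e)" if "\<pi> + \<eta> \<le> nsm p \<eta>"
    using v_add[of "y [^] p" "nat_elem p \<otimes> y \<otimes> e"] vyp vpye y e that by (simp add: min_absorb2)
qed

lemma nat_elem_pow_p_congruent: "nat_elem a [^] p \<ominus> nat_elem a \<in> M"
proof (induction a)
  case 0
  then show ?case
    using two_le_p by (simp add: nat_pow_zero a_minus_def)
next
  case (Suc a)
  let ?a = "nat_elem a"
  obtain w where w: "w \<in> A" "(\<one> \<oplus> ?a) [^] p \<ominus> \<one> = ?a [^] p \<oplus> nat_elem p \<otimes> ?a \<otimes> (\<one> \<oplus> ?a \<otimes> w)"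
    using one_plus_pow_prime_minus_one[OF prime_p, of ?a] by auto
  have carrier: "?a \<in> carrier L" "?a [^] p \<in> carrier L" "(\<one> \<oplus> ?a) [^] p \<in> carrier L"
    "nat_elem p \<otimes> ?a \<otimes> (\<one> \<oplus> ?a \<otimes> w) \<in> carrier L"
    using w(1) val_ring_subset_carrier by simp_all
  have Suc_a: "nat_elem (Suc a) = \<one> \<oplus> ?a"
    by (simp add: add.nat_pow_Suc a_comm)
  have "nat_elem (Suc a) [^] p \<ominus> nat_elem (Suc a) = ((\<one> \<oplus> ?a) [^] p \<ominus> \<one>) \<ominus> ?a"
    unfolding Suc_a using carrier by algebra
  also have "\<dots> = (?a [^] p \<ominus> ?a) \<oplus> nat_elem p \<otimes> ?a \<otimes> (\<one> \<oplus> ?a \<otimes> w)"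
    unfolding w(2) using carrier by algebra
  finally show ?case
    using Suc w(1) nat_elem_p_in_val_ideal by (simp add: val_ideal_closed)
qed

lemma exists_residue_root_rescaled:
  assumes c: "c \<in> A" and z: "z \<in> A" and r: "r \<in> A" and i: "\<not> p dvd i"
    and root: "nat_elem i \<otimes> c \<oplus> z [^] p \<oplus> r \<otimes> z \<in> M"
  shows "\<exists>x\<in>A. c \<ominus> (x [^] p \<oplus> r \<otimes> x) \<in> M"
proof -
  obtain a k where ak: "a * i + 1 = p * k"
    using exists_inverse_mod_prime[OF prime_p i] .
  let ?a = "nat_elem a" and ?i = "nat_elem i"
  have carrier: "c \<in> carrier L" "z \<in> carrier L" "r \<in> carrier L" "z [^] p \<in> carrier L"
    "?a \<in> carrier L" "?i \<in> carrier L" "?a [^] p \<in> carrier L"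
    using c z r val_ring_subset_carrier by simp_all
  have pk: "nat_elem (p * k) = ?a \<otimes> ?i \<oplus> \<one>"
    using ak[symmetric] by (simp add: nat_elem_add nat_elem_mult)
  have az: "(?a \<otimes> z) [^] p = ?a [^] p \<otimes> z [^] p"
    using carrier by (simp add: nat_pow_distrib)
  \<comment> \<open>\<open>x = a z\<close> works: \<open>a\<^sup>p \<equiv> a\<close> and \<open>p \<equiv> 0\<close> modulo \<open>M\<close>, and \<open>a i \<equiv> -1\<close> modulo \<open>p\<close>.\<close>
  have "c \<ominus> ((?a \<otimes> z) [^] p \<oplus> r \<otimes> (?a \<otimes> z))
      = nat_elem (p * k) \<otimes> c \<ominus> ?a \<otimes> (?i \<otimes> c \<oplus> z [^] p \<oplus> r \<otimes> z) \<ominus> (?a [^] p \<ominus> ?a) \<otimes> z [^] p"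
    unfolding pk az using carrier by algebra
  also have "\<dots> \<in> M"
    using residue_char_p c z root nat_elem_pow_p_congruent by (simp add: val_ideal_closed)
  finally have "c \<ominus> ((?a \<otimes> z) [^] p \<oplus> r \<otimes> (?a \<otimes> z)) \<in> M" .
  moreover have "?a \<otimes> z \<in> A"
    using z by simp
  ultimately show ?thesis
    by blast
qed

lemma minus_one_in_val_ideal_if_v_pos:
  assumes h: "h \<in> K" "h \<ominus> \<one> \<in> M" and g: "g \<in> K" "g \<noteq> \<zero>"
    and pos: "0 < v (h [^] (i::nat) \<otimes> g [^] p \<ominus> \<one>)"
  shows "g \<ominus> \<one> \<in> M"
proof -
  have vh: "v h = 0"
    using h by (rule v_eq_0_if_minus_one_in_val_ideal)
  have vX: "v (h [^] i \<otimes> g [^] p) = nsm p (v g)"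
    using v_mult[of "h [^] i" "g [^] p"] v_pow[of h i] v_pow[of g p] h g vh by simp
  have vg: "v g = 0"
  proof (rule ccontr)
    assume "v g \<noteq> 0"
    moreover obtain \<gamma> where "v g = Fin \<gamma>"
      using v_finite g by blast
    ultimately have "v (h [^] i \<otimes> g [^] p) \<noteq> 0"
      using vX nsm_eq_0_iff[of p \<gamma>] two_le_p by (simp add: nsm_Fin zero_extended_def)
    then show False
      using v_minus_one_le_zero[of "h [^] i \<otimes> g [^] p"] pos h g by simp
  qed
  have hA: "h \<in> A" and gA: "g \<in> A"
    using h g vh vg by (simp_all add: val_ring_iff)
  have carrier: "h [^] i \<in> carrier L" "g [^] p \<in> carrier L"
    using h g K_subset_carrier by simp_all
  have "g [^] p \<ominus> \<one> = (h [^] i \<otimes> g [^] p \<ominus> \<one>) \<ominus> (h [^] i \<ominus> \<one>) \<otimes> g [^] p"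
    using carrier by algebra
  also have "\<dots> \<in> M"
    using pos h g gA pow_minus_one_in_val_ideal[OF hA h(2)] val_ideal_iff[of "h [^] i \<otimes> g [^] p \<ominus> \<one>"]
    by (simp add: val_ideal_closed)
  finally have gp: "g [^] p \<ominus> \<one> \<in> M" .
  obtain w where w: "w \<in> A"
    "g [^] p \<ominus> \<one> = (g \<ominus> \<one>) [^] p \<oplus> nat_elem p \<otimes> (g \<ominus> \<one>) \<otimes> (\<one> \<oplus> (g \<ominus> \<one>) \<otimes> w)"
    using pow_p_minus_one_expansion[OF gA] .
  then have "(g \<ominus> \<one>) [^] p = (g [^] p \<ominus> \<one>) \<ominus> nat_elem p \<otimes> (g \<ominus> \<one>) \<otimes> (\<one> \<oplus> (g \<ominus> \<one>) \<otimes> w)"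
    using w gA val_ring_subset_carrier by (simp add: a_minus_def add.m_assoc r_neg)
  also have "\<dots> \<in> M"
    using gp gA w(1) nat_elem_p_in_val_ideal by (simp add: val_ideal_closed)
  finally show ?thesis
    using val_ideal_if_pow[of "g \<ominus> \<one>" p] gA two_le_p by simp
qed

lemma val_p_divides_if_v_pow_mult_eq_0:
  assumes h: "h \<in> K" "h \<noteq> \<zero>" and g: "g \<in> K" "g \<noteq> \<zero>" and i: "\<not> p dvd i"
    and v0: "v (h [^] i \<otimes> g [^] p) = 0"
  shows "val_p_divides L K v p h"
proof -
  obtain \<eta> \<gamma> where \<eta>: "v h = Fin \<eta>" and \<gamma>: "v g = Fin \<gamma>"
    using v_finite h g by metis
  obtain a k where ak: "a * i + 1 = p * k"
    using exists_inverse_mod_prime[OF prime_p i] .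
  have "nsm i \<eta> + nsm p \<gamma> = 0"
    using v0 v_mult v_pow \<eta> \<gamma> h g by (simp add: nsm_Fin zero_extended_def)
  with ak have "\<eta> = nsm p (nsm k \<eta> + nsm a \<gamma>)"
    by (rule nsm_eq_multiple_if_coprime)
  moreover have "v (h [^] k \<otimes> g [^] a) = Fin (nsm k \<eta> + nsm a \<gamma>)"
    using v_mult v_pow \<eta> \<gamma> h g by (simp add: nsm_Fin)
  ultimately show ?thesis
    unfolding val_p_divides_def using h g \<eta> by (intro bexI[of _ "h [^] k \<otimes> g [^] a"]) auto
qed

lemma is_best_if_not_val_p_divides:
  assumes h: "h \<in> A" and not_dvd: "\<not> val_p_divides L K v p h"
  shows "is_best L K v p h"
proof (rule is_bestI[OF two_le_p])
  show hK: "h \<in> K"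
    using h by (simp add: val_ring_iff)
  have "v h \<noteq> 0"
  proof
    assume "v h = 0"
    then have "val_p_divides L K v p h"
      unfolding val_p_divides_def by (intro bexI[of _ \<one>] exI[of _ 0]) (simp_all add: zero_extended_def)
    then show False
      using not_dvd by simp
  qed
  then have "v (\<ominus> \<one>) < v h"
    using h by (auto simp: val_ring_iff order_less_le)
  then have vh1: "v (h \<ominus> \<one>) = 0"
    using v_add_eq_right[of h "\<ominus> \<one>"] hK by (simp add: a_minus_def)
  fix g and i :: nat
  assume g: "g \<in> K" "g \<noteq> \<zero>" and i: "\<not> p dvd i"
  show "v (h [^] i \<otimes> g [^] p \<ominus> \<one>) \<le> v (h \<ominus> \<one>)"
  proof (cases "h = \<zero>")
    case True
    have "i \<noteq> 0"
      using i by (metis dvd_0_right)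
    then show ?thesis
      using True g K_subset_carrier vh1 by (simp add: nat_pow_zero a_minus_def)
  next
    case False
    then have "v (h [^] i \<otimes> g [^] p) \<noteq> 0"
      using val_p_divides_if_v_pow_mult_eq_0[OF hK _ g i] not_dvd by blast
    then show ?thesis
      using v_minus_one_le_zero[of "h [^] i \<otimes> g [^] p"] hK g vh1 by simp
  qed
qed

lemma exists_pth_root_if_pow_mult_congruent_one:
  assumes h: "h \<in> A" and g: "g \<in> A" and i: "\<not> p dvd i" and u1: "h [^] i \<otimes> g [^] p \<ominus> \<one> \<in> M"
  shows "\<exists>x\<in>A. h \<ominus> x [^] p \<in> M"
proof -
  obtain a k where ak: "a * i + 1 = p * k"
    using exists_inverse_mod_prime[OF prime_p i] .
  define u where "u = h [^] i \<otimes> g [^] p"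
  have carrier: "h \<in> carrier L" "g \<in> carrier L" "u [^] a \<in> carrier L"
    unfolding u_def using h g val_ring_subset_carrier by simp_all
  have "(h [^] k \<otimes> g [^] a) [^] p = h [^] (a * i + 1) \<otimes> g [^] (p * a)"
    using carrier ak by (simp add: nat_pow_distrib nat_pow_pow mult.commute)
  also have "\<dots> = h \<otimes> u [^] a"
    unfolding u_def using carrier
    by (simp add: nat_pow_distrib nat_pow_pow nat_pow_mult[symmetric] m_ac mult.commute)
  finally have pow: "(h [^] k \<otimes> g [^] a) [^] p = h \<otimes> u [^] a" .
  have "h \<ominus> (h [^] k \<otimes> g [^] a) [^] p = \<ominus> (h \<otimes> (u [^] a \<ominus> \<one>))"
    unfolding pow using carrier by algebra
  also have "\<dots> \<in> M"
    using pow_minus_one_in_val_ideal[of u] u1 h g unfolding u_def by (simp add: val_ideal_closed)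
  finally show ?thesis
    using h g by (intro bexI[of _ "h [^] k \<otimes> g [^] a"]) simp_all
qed

lemma is_best_if_unit_not_pth_power:
  assumes h: "h \<in> val_units K v" and no_root: "\<not> (\<exists>x\<in>A. h \<ominus> x [^] p \<in> M)"
  shows "is_best L K v p h"
proof (rule is_bestI[OF two_le_p])
  show hK: "h \<in> K"
    using h by (simp add: val_units_def)
  have hA: "h \<in> A"
    using h by (simp add: val_units_def val_ring_iff)
  have "h \<ominus> \<one> [^] p \<notin> M"
    using no_root val_ring_one by blast
  then have vh1: "v (h \<ominus> \<one>) = 0"
    using val_ideal_iff_v_less[of "h \<ominus> \<one>"] hA by simp
  fix g and i :: nat
  assume g: "g \<in> K" "g \<noteq> \<zero>" and i: "\<not> p dvd i"
  show "v (h [^] i \<otimes> g [^] p \<ominus> \<one>) \<le> v (h \<ominus> \<one>)"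
    unfolding vh1
  proof (rule ccontr)
    assume "\<not> v (h [^] i \<otimes> g [^] p \<ominus> \<one>) \<le> 0"
    then have u1: "h [^] i \<otimes> g [^] p \<ominus> \<one> \<in> M"
      using hK g by (simp add: val_ideal_iff)
    then have "nsm p (v g) = 0"
      using v_eq_0_if_minus_one_in_val_ideal[OF _ u1] v_mult v_pow hK g h by (simp add: val_units_def)
    moreover obtain \<gamma> where "v g = Fin \<gamma>"
      using v_finite g by blast
    ultimately have "g \<in> A"
      using g nsm_eq_0_iff[of p \<gamma>] two_le_p by (simp add: val_ring_iff nsm_Fin zero_extended_def)
    then show False
      using exists_pth_root_if_pow_mult_congruent_one[OF hA _ i u1] no_root by blast
  qed
qed

lemma expansion_if_v_gt:
  assumes y: "y \<in> M" and g: "g \<in> K" "g \<noteq> \<zero>"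
    and gt: "v y < v ((\<one> \<oplus> y) [^] (i::nat) \<otimes> g [^] p \<ominus> \<one>)"
  obtains w where "w \<in> A" "g \<ominus> \<one> \<in> M" "g \<in> A"
    "(\<one> \<oplus> y) [^] i \<otimes> g [^] p \<ominus> \<one> = y \<otimes> (nat_elem i \<oplus> y \<otimes> w) \<otimes> g [^] p \<oplus> (g [^] p \<ominus> \<one>)"
proof -
  have yA: "y \<in> A" and yc: "y \<in> carrier L"
    using y val_ideal_subset_val_ring val_ring_subset_carrier by auto
  have h: "\<one> \<oplus> y \<in> K" "(\<one> \<oplus> y) \<ominus> \<one> \<in> M"
    using yA yc y by (simp_all add: val_ring_iff)
  have "0 < v y"
    using y by (simp add: val_ideal_iff)
  then have g1: "g \<ominus> \<one> \<in> M"
    using minus_one_in_val_ideal_if_v_pos[OF h g] gt less_trans by blast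
  then have gA: "g \<in> A"
    using g v_eq_0_if_minus_one_in_val_ideal by (simp add: val_ring_iff)
  obtain w where w: "w \<in> A" "(\<one> \<oplus> y) [^] i \<ominus> \<one> = y \<otimes> (nat_elem i \<oplus> y \<otimes> w)"
    using one_plus_pow_minus_one[OF yA] by blast
  have carrier: "(\<one> \<oplus> y) [^] i \<in> carrier L" "g [^] p \<in> carrier L"
    using yc g K_subset_carrier by simp_all
  have "(\<one> \<oplus> y) [^] i \<otimes> g [^] p \<ominus> \<one> = ((\<one> \<oplus> y) [^] i \<ominus> \<one>) \<otimes> g [^] p \<oplus> (g [^] p \<ominus> \<one>)"
    using carrier by algebra
  then show ?thesis
    using that w g1 gA by simp
qed

lemma v_pow_p_minus_one_eq_if_v_gt:
  assumes y: "y \<in> M" and g: "g \<in> K" "g \<noteq> \<zero>" and i: "\<not> p dvd i"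
    and gt: "v y < v ((\<one> \<oplus> y) [^] i \<otimes> g [^] p \<ominus> \<one>)"
  shows "v (g [^] p \<ominus> \<one>) = v y"
proof -
  obtain w where w: "w \<in> A" "g \<ominus> \<one> \<in> M" and expand:
    "(\<one> \<oplus> y) [^] i \<otimes> g [^] p \<ominus> \<one> = y \<otimes> (nat_elem i \<oplus> y \<otimes> w) \<otimes> g [^] p \<oplus> (g [^] p \<ominus> \<one>)"
    using expansion_if_v_gt[OF y g gt] by blast
  define B where "B = nat_elem i \<oplus> y \<otimes> w"
  have yK: "y \<in> K" and BK: "B \<in> K" and gpK: "g [^] p \<in> K"
    using y w g unfolding B_def by (simp_all add: val_ring_iff val_ideal_iff)
  have "v B = 0"
    unfolding B_def using v_add_eq_left[of "nat_elem i" "y \<otimes> w"] v_nat_elem_not_dvd[OF i]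
      val_ideal_mult_right[OF y w(1)] by (simp add: val_ideal_iff)
  moreover have "v (g [^] p) = 0"
    using v_pow[of g p] v_eq_0_if_minus_one_in_val_ideal[of g] w(2) g by simp
  ultimately have "v (y \<otimes> B \<otimes> g [^] p) = v y"
    using v_mult[of "y \<otimes> B" "g [^] p"] v_mult[of y B] yK BK gpK by simp
  then show ?thesis
    using v_eq_if_v_add_greater[of "y \<otimes> B \<otimes> g [^] p" "g [^] p \<ominus> \<one>"] gt expand yK BK gpK
    unfolding B_def by simp
qed

lemma val_p_divides_pow_p_minus_one:
  assumes g: "g \<in> A" "g \<ominus> \<one> \<in> M"
    and small: "nsm (p - 1) (v (g [^] p \<ominus> \<one>)) < nsm p (v (nat_elem p))"
  shows "val_p_divides L K v p (g [^] p \<ominus> \<one>)"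
proof -
  obtain \<pi> where \<pi>: "v (nat_elem p) = Fin \<pi>" "0 < \<pi>"
    using v_p .
  define y where "y = g \<ominus> \<one>"
  obtain w where w: "w \<in> A" "g [^] p \<ominus> \<one> = y [^] p \<oplus> nat_elem p \<otimes> y \<otimes> (\<one> \<oplus> y \<otimes> w)"
    using pow_p_minus_one_expansion[OF g(1)] unfolding y_def .
  have y: "y \<in> M" "y \<in> K"
    using g unfolding y_def by (simp_all add: val_ideal_iff)
  have e: "\<one> \<oplus> y \<otimes> w \<in> K" "v (\<one> \<oplus> y \<otimes> w) = 0"
    using y w val_ideal_mult_right[OF y(1) w(1)] v_one_plus_val_ideal by (simp_all add: val_ring_iff)
  have "g [^] p \<ominus> \<one> \<noteq> \<zero>"
  proof
    assume "g [^] p \<ominus> \<one> = \<zero>"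
    then have "nsm (p - 1) (v (g [^] p \<ominus> \<one>)) = Pinf"
      using nsm_Pinf[of "p - 1"] two_le_p by simp
    then show False
      using small \<pi> by (simp add: nsm_Fin)
  qed
  moreover have "g [^] p \<ominus> \<one> \<in> K"
    using g(1) by (simp add: val_ring_iff)
  ultimately obtain \<tau> where \<tau>: "v (g [^] p \<ominus> \<one>) = Fin \<tau>"
    using v_finite by blast
  have "y \<noteq> \<zero>"
    using \<open>g [^] p \<ominus> \<one> \<noteq> \<zero>\<close> w(2) two_le_p e(1) K_subset_carrier by (auto simp: nat_pow_zero)
  then obtain \<eta> where \<eta>: "v y = Fin \<eta>"
    using v_finite y(2) by blast
  note dichotomy = v_pow_p_plus_p_multiple[OF y(2) \<eta> e \<pi>(1)]
  \<comment> \<open>Otherwise \<open>v(p) + v(y) \<le> p v(y)\<close> and \<open>v(p) + v(y) \<le> v(g\<^sup>p - 1)\<close>, whence \<open>p v(p) \<le> (p - 1) v(g\<^sup>p - 1)\<close>.\<close>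
  have "nsm p \<eta> < \<pi> + \<eta>"
  proof (rule ccontr)
    assume "\<not> ?thesis"
    then have "\<pi> + \<eta> \<le> nsm (Suc (p - 1)) \<eta>" and "\<pi> + \<eta> \<le> \<tau>"
      using dichotomy(2) w(2) \<tau> two_le_p by simp_all
    then have "nsm (Suc (p - 1)) \<pi> \<le> nsm (p - 1) \<tau>"
      by (rule nsm_Suc_le_if_min_le)
    then show False
      using small \<pi> \<tau> two_le_p by (simp add: nsm_Fin)
  qed
  then have "v (g [^] p \<ominus> \<one>) = Fin (nsm p \<eta>)"
    using dichotomy(1) w(2) by simp
  then show ?thesis
    unfolding val_p_divides_def using y(2) \<open>y \<noteq> \<zero>\<close> \<eta> by blast
qed

lemma is_best_if_one_plus_small_not_p_divisible:
  assumes c: "c \<in> val_units K v" and t: "t \<in> M"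
    and small: "nsm (p - 1) (v t) < nsm p (v (nat_elem p))"
    and not_dvd: "\<not> val_p_divides L K v p t"
  shows "is_best L K v p (\<one> \<oplus> c \<otimes> t)"
proof (rule is_bestI[OF two_le_p])
  have cA: "c \<in> A" and vc: "v c = 0" and tK: "t \<in> K"
    using c t by (simp_all add: val_units_def val_ring_iff val_ideal_iff)
  have ct: "c \<otimes> t \<in> M" "v (c \<otimes> t) = v t"
    using cA t vc tK v_mult[of c t] by (simp_all add: val_ideal_closed val_ring_iff)
  show "\<one> \<oplus> c \<otimes> t \<in> K"
    using cA tK by (simp add: val_ring_iff)
  have h1: "v ((\<one> \<oplus> c \<otimes> t) \<ominus> \<one>) = v t"
    using ct cA tK K_subset_carrier by (simp add: val_ring_iff)
  fix g and i :: nat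
  assume g: "g \<in> K" "g \<noteq> \<zero>" and i: "\<not> p dvd i"
  show "v ((\<one> \<oplus> c \<otimes> t) [^] i \<otimes> g [^] p \<ominus> \<one>) \<le> v ((\<one> \<oplus> c \<otimes> t) \<ominus> \<one>)"
  proof (rule ccontr)
    assume "\<not> ?thesis"
    then have gt: "v (c \<otimes> t) < v ((\<one> \<oplus> c \<otimes> t) [^] i \<otimes> g [^] p \<ominus> \<one>)"
      using h1 ct by simp
    have "g \<ominus> \<one> \<in> M" "g \<in> A"
      using expansion_if_v_gt[OF ct(1) g gt] by blast+
    moreover have "v (g [^] p \<ominus> \<one>) = v t"
      using v_pow_p_minus_one_eq_if_v_gt[OF ct(1) g i gt] ct(2) by simp
    ultimately have "val_p_divides L K v p (g [^] p \<ominus> \<one>)"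
      using val_p_divides_pow_p_minus_one small by simp
    then show False
      using not_dvd \<open>v (g [^] p \<ominus> \<one>) = v t\<close> by (simp add: val_p_divides_def)
  qed
qed

lemma nsm_v_le_v_p_if_factor:
  fixes \<sigma> \<pi>
  assumes s: "s \<in> K" "v s = Fin \<sigma>" and r: "r \<in> A" and ps: "nat_elem p \<otimes> s = s [^] p \<otimes> r"
    and \<pi>: "v (nat_elem p) = Fin \<pi>"
  shows "nsm (p - 1) \<sigma> \<le> \<pi>"
proof -
  have "r \<noteq> \<zero>"
    using ps char_0 two_le_p s K_subset_carrier integral_iff by auto
  then obtain \<rho> where \<rho>: "v r = Fin \<rho>"
    using v_finite r by (auto simp: val_ring_iff)
  have "Fin (\<pi> + \<sigma>) = Fin (nsm p \<sigma> + \<rho>)"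
    using arg_cong[OF ps, of v] v_mult[of "nat_elem p" s] v_mult[of "s [^] p" r] v_pow[of s p] \<pi> s \<rho> r
    by (simp add: nsm_Fin val_ring_iff)
  then show ?thesis
    using \<rho> r nsm_Suc_right[of "p - 1" \<sigma>] two_le_p by (simp add: val_ring_iff zero_extended_def algebra_simps)
qed

lemma v_pow_p_minus_one_less_if_v_less:
  assumes g: "g \<in> A" "g \<ominus> \<one> \<in> M" and s: "s \<in> K" "s \<noteq> \<zero>" and r: "r \<in> A"
    and ps: "nat_elem p \<otimes> s = s [^] p \<otimes> r" and less: "v (g \<ominus> \<one>) < v s"
  shows "v (g [^] p \<ominus> \<one>) < v (s [^] p)"
proof -
  define y where "y = g \<ominus> \<one>"
  obtain w where w: "w \<in> A" "g [^] p \<ominus> \<one> = y [^] p \<oplus> nat_elem p \<otimes> y \<otimes> (\<one> \<oplus> y \<otimes> w)"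
    using pow_p_minus_one_expansion[OF g(1)] unfolding y_def .
  have y: "y \<in> M" "y \<in> K"
    using g unfolding y_def by (simp_all add: val_ideal_iff)
  have e: "\<one> \<oplus> y \<otimes> w \<in> K" "v (\<one> \<oplus> y \<otimes> w) = 0"
    using y w val_ideal_mult_right[OF y(1) w(1)] v_one_plus_val_ideal by (simp_all add: val_ring_iff)
  obtain \<pi> where \<pi>: "v (nat_elem p) = Fin \<pi>" "0 < \<pi>"
    using v_p .
  obtain \<sigma> where \<sigma>: "v s = Fin \<sigma>"
    using v_finite s by blast
  have "y \<noteq> \<zero>"
    using less \<sigma> unfolding y_def by auto
  then obtain \<eta> where \<eta>: "v y = Fin \<eta>"
    using v_finite y(2) by blast
  have "nsm (p - 1) \<eta> < nsm (p - 1) \<sigma>"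
    using less \<sigma> \<eta> two_le_p unfolding y_def by (intro nsm_strict_mono) simp_all
  then have "nsm p \<eta> < \<pi> + \<eta>"
    using nsm_v_le_v_p_if_factor[OF s(1) \<sigma> r ps \<pi>(1)] nsm_Suc_right[of "p - 1" \<eta>] two_le_p by simp
  then have "v (g [^] p \<ominus> \<one>) = Fin (nsm p \<eta>)"
    using v_pow_p_plus_p_multiple(1)[OF y(2) \<eta> e \<pi>(1)] w(2) by simp
  also have "\<dots> < v (s [^] p)"
    using v_pow[of s p] \<sigma> \<eta> less nsm_strict_mono[of \<eta> \<sigma> p] two_le_p s unfolding y_def
    by (simp add: nsm_Fin)
  finally show ?thesis .
qed

lemma minus_one_divisible_if_v_gt:
  assumes s: "s \<in> M" "s \<noteq> \<zero>" and r: "r \<in> A" and ps: "nat_elem p \<otimes> s = s [^] p \<otimes> r"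
    and c: "c \<in> val_units K v" and g: "g \<in> K" "g \<noteq> \<zero>"
    and gt: "v (s [^] p) < v ((\<one> \<oplus> c \<otimes> s [^] p) [^] (i::nat) \<otimes> g [^] p \<ominus> \<one>)"
  shows "\<exists>z\<in>A. g \<ominus> \<one> = s \<otimes> z"
proof -
  define S where "S = s [^] p"
  have SM: "S \<in> M"
    unfolding S_def using s(1) two_le_p by (simp add: val_ideal_pow)
  have sK: "s \<in> K" and cA: "c \<in> A" and vc: "v c = 0" and SK: "S \<in> K"
    using s c SM by (simp_all add: val_ideal_iff val_ring_iff val_units_def)
  have cS: "c \<otimes> S \<in> M" "v (c \<otimes> S) = v S"
    using SM cA vc v_mult[of c S] SK by (simp_all add: val_ideal_closed val_ring_iff)
  obtain w where w: "w \<in> A" "g \<ominus> \<one> \<in> M" "g \<in> A" and expand: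
    "(\<one> \<oplus> c \<otimes> S) [^] i \<otimes> g [^] p \<ominus> \<one> = c \<otimes> S \<otimes> (nat_elem i \<oplus> c \<otimes> S \<otimes> w) \<otimes> g [^] p \<oplus> (g [^] p \<ominus> \<one>)"
    using expansion_if_v_gt[OF cS(1) g] gt cS(2) unfolding S_def by metis
  have "v s \<le> v (g \<ominus> \<one>)"
  proof (rule ccontr)
    assume "\<not> ?thesis"
    then have "v (g [^] p \<ominus> \<one>) < v S"
      unfolding S_def using v_pow_p_minus_one_less_if_v_less[OF w(3,2) sK s(2) r ps] by simp
    moreover have "c \<otimes> S \<otimes> (nat_elem i \<oplus> c \<otimes> S \<otimes> w) \<otimes> g [^] p = S \<otimes> (c \<otimes> (nat_elem i \<oplus> c \<otimes> S \<otimes> w) \<otimes> g [^] p)"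
      using cA SK w g K_subset_carrier by (simp add: val_ring_iff m_ac)
    then have "v S \<le> v (c \<otimes> S \<otimes> (nat_elem i \<oplus> c \<otimes> S \<otimes> w) \<otimes> g [^] p)"
      using v_mult_val_ring[OF SK] cA w val_ideal_subset_val_ring[OF SM] by simp
    ultimately show False
      using gt expand v_add_eq_right[of "c \<otimes> S \<otimes> (nat_elem i \<oplus> c \<otimes> S \<otimes> w) \<otimes> g [^] p" "g [^] p \<ominus> \<one>"]
        cA SK w g unfolding S_def by (simp add: val_ring_iff)
  qed
  moreover have "s \<otimes> (inv s \<otimes> (g \<ominus> \<one>)) = g \<ominus> \<one>"
    using K_inv_closed[OF sK s(2)] sK g K_subset_carrier by (simp add: m_assoc[symmetric])
  ultimately have "inv s \<otimes> (g \<ominus> \<one>) \<in> A"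
    using K_inv_closed[OF sK s(2)] sK g by (intro val_ring_if_v_mult_le[OF sK s(2)]) simp_all
  then show ?thesis
    using \<open>s \<otimes> (inv s \<otimes> (g \<ominus> \<one>)) = g \<ominus> \<one>\<close> by metis
qed

lemma exists_residue_root_if_v_gt:
  assumes s: "s \<in> M" "s \<noteq> \<zero>" and r: "r \<in> A" and ps: "nat_elem p \<otimes> s = s [^] p \<otimes> r"
    and c: "c \<in> val_units K v" and g: "g \<in> K" "g \<noteq> \<zero>" and i: "\<not> p dvd i"
    and gt: "v (s [^] p) < v ((\<one> \<oplus> c \<otimes> s [^] p) [^] i \<otimes> g [^] p \<ominus> \<one>)"
  shows "\<exists>x\<in>A. c \<ominus> (x [^] p \<oplus> r \<otimes> x) \<in> M"
proof -
  define S where "S = s [^] p"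
  have SM: "S \<in> M"
    unfolding S_def using s(1) two_le_p by (simp add: val_ideal_pow)
  have sK: "s \<in> K" and cA: "c \<in> A" and vc: "v c = 0" and SK: "S \<in> K"
    using s c SM by (simp_all add: val_ideal_iff val_ring_iff val_units_def)
  have cS: "c \<otimes> S \<in> M" "v (c \<otimes> S) = v S"
    using SM cA vc v_mult[of c S] SK by (simp_all add: val_ideal_closed val_ring_iff)
  obtain w1 where w1: "w1 \<in> A" "g \<ominus> \<one> \<in> M" "g \<in> A" and expand:
    "(\<one> \<oplus> c \<otimes> S) [^] i \<otimes> g [^] p \<ominus> \<one> = c \<otimes> S \<otimes> (nat_elem i \<oplus> c \<otimes> S \<otimes> w1) \<otimes> g [^] p \<oplus> (g [^] p \<ominus> \<one>)"
    using expansion_if_v_gt[OF cS(1) g] gt cS(2) unfolding S_def by metis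
  define y where "y = g \<ominus> \<one>"
  obtain w2 where w2: "w2 \<in> A" "g [^] p \<ominus> \<one> = y [^] p \<oplus> nat_elem p \<otimes> y \<otimes> (\<one> \<oplus> y \<otimes> w2)"
    using pow_p_minus_one_expansion[OF w1(3)] unfolding y_def .
  obtain z where z: "z \<in> A" "y = s \<otimes> z"
    using minus_one_divisible_if_v_gt[OF s r ps c g gt] unfolding y_def by blast
  have carrier: "c \<in> carrier L" "S \<in> carrier L" "w1 \<in> carrier L" "w2 \<in> carrier L" "g [^] p \<in> carrier L"
    "z \<in> carrier L" "z [^] p \<in> carrier L" "r \<in> carrier L" "s \<in> carrier L" "y \<in> carrier L"
    "nat_elem i \<in> carrier L" "nat_elem p \<in> carrier L"
    using cA SK w1 w2 z r sK g val_ring_subset_carrier K_subset_carrier unfolding y_def by simp_all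
  have sz: "(s \<otimes> z) [^] p = S \<otimes> z [^] p"
    unfolding S_def using carrier by (simp add: nat_pow_distrib)
  \<comment> \<open>Writing \<open>g = 1 + s z\<close>, the element \<open>h\<^sup>i g\<^sup>p - 1\<close> is \<open>s\<^sup>p Q\<close>, and \<open>Q\<close> reduces to \<open>i c + z\<^sup>p + r z\<close> modulo \<open>M\<close>.\<close>
  define Q where "Q = c \<otimes> (nat_elem i \<oplus> c \<otimes> S \<otimes> w1) \<otimes> g [^] p \<oplus> (z [^] p \<oplus> r \<otimes> z \<otimes> (\<one> \<oplus> y \<otimes> w2))"
  have "(\<one> \<oplus> c \<otimes> S) [^] i \<otimes> g [^] p \<ominus> \<one>
      = c \<otimes> S \<otimes> (nat_elem i \<oplus> c \<otimes> S \<otimes> w1) \<otimes> g [^] p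
        \<oplus> (S \<otimes> z [^] p \<oplus> (nat_elem p \<otimes> s) \<otimes> (z \<otimes> (\<one> \<oplus> y \<otimes> w2)))"
    unfolding expand w2(2) unfolding z(2) sz using carrier by algebra
  also have "\<dots> = S \<otimes> Q"
    unfolding ps S_def[symmetric] Q_def using carrier by algebra
  finally have "v S < v (S \<otimes> Q)"
    using gt unfolding S_def by simp
  moreover have "Q \<in> K"
    unfolding Q_def y_def using cA w1 w2 z r g SK sK by (simp add: val_ring_iff)
  ultimately have QM: "Q \<in> M"
    using val_ideal_if_v_mult_less[OF SK] K_pow_nonzero[OF sK s(2)] unfolding S_def by blast
  have "nat_elem i \<otimes> c \<oplus> z [^] p \<oplus> r \<otimes> z
      = Q \<ominus> (c \<otimes> nat_elem i \<otimes> (g [^] p \<ominus> \<one>) \<oplus> c \<otimes> (c \<otimes> S \<otimes> w1) \<otimes> g [^] p \<oplus> r \<otimes> z \<otimes> (y \<otimes> w2))"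
    unfolding Q_def using carrier by algebra
  also have "\<dots> \<in> M"
    using QM pow_minus_one_in_val_ideal[OF w1(3,2), of p] SM cA w1(1,3) w2(1) z(1) r
      val_ideal_mult_right[OF w1(2) w2(1)]
    unfolding y_def by (simp add: val_ideal_closed)
  finally show ?thesis
    using exists_residue_root_rescaled[OF cA z(1) r i] by blast
qed

lemma is_best_if_no_residue_root:
  assumes s: "s \<in> M" "s \<noteq> \<zero>" and r: "r \<in> A" and ps: "nat_elem p \<otimes> s = s [^] p \<otimes> r"
    and c: "c \<in> val_units K v" and no_root: "\<not> (\<exists>x\<in>A. c \<ominus> (x [^] p \<oplus> r \<otimes> x) \<in> M)"
  shows "is_best L K v p (\<one> \<oplus> c \<otimes> s [^] p)"
proof (rule is_bestI[OF two_le_p])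
  have sK: "s \<in> K" and cK: "c \<in> K" and vc: "v c = 0"
    using s c by (simp_all add: val_ideal_iff val_units_def)
  show "\<one> \<oplus> c \<otimes> s [^] p \<in> K"
    using sK cK by simp
  have h1: "v ((\<one> \<oplus> c \<otimes> s [^] p) \<ominus> \<one>) = v (s [^] p)"
    using v_mult[of c "s [^] p"] sK cK vc K_subset_carrier by simp
  fix g and i :: nat
  assume g: "g \<in> K" "g \<noteq> \<zero>" and i: "\<not> p dvd i"
  show "v ((\<one> \<oplus> c \<otimes> s [^] p) [^] i \<otimes> g [^] p \<ominus> \<one>) \<le> v ((\<one> \<oplus> c \<otimes> s [^] p) \<ominus> \<one>)"
    using exists_residue_root_if_v_gt[OF s r ps c g i] no_root h1 by force
qed

lemma exists_factor_if_small:
  assumes s: "s \<in> M" and small: "nsm (p - 1) (v s) < v (nat_elem p)"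
  obtains r where "s \<noteq> \<zero>" "r \<in> M" "nat_elem p \<otimes> s = s [^] p \<otimes> r"
proof -
  obtain \<pi> where \<pi>: "v (nat_elem p) = Fin \<pi>" "0 < \<pi>"
    using v_p .
  have sK: "s \<in> K"
    using s by (simp add: val_ideal_iff)
  have "s \<noteq> \<zero>"
  proof
    assume "s = \<zero>"
    then have "nsm (p - 1) (v s) = Pinf"
      using nsm_Pinf[of "p - 1"] two_le_p by simp
    then show False
      using small \<pi> by simp
  qed
  then obtain \<sigma> where \<sigma>: "v s = Fin \<sigma>"
    using v_finite sK by blast
  have S: "s [^] p \<in> K" "s [^] p \<noteq> \<zero>" "v (s [^] p) = Fin (nsm p \<sigma>)"
    using sK K_pow_nonzero[OF sK \<open>s \<noteq> \<zero>\<close>] v_pow[OF sK] \<sigma> by (simp_all add: nsm_Fin)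
  define r where "r = nat_elem p \<otimes> s \<otimes> inv (s [^] p)"
  have inv: "inv (s [^] p) \<in> K" "s [^] p \<otimes> inv (s [^] p) = \<one>" "v (inv (s [^] p)) = Fin (- nsm p \<sigma>)"
    using K_inv_closed[OF S(1,2)] v_inv[OF S] by auto
  have "v r = Fin (\<pi> + \<sigma> - nsm p \<sigma>)"
    unfolding r_def using v_mult[of "nat_elem p \<otimes> s" "inv (s [^] p)"] v_mult[of "nat_elem p" s] \<pi> \<sigma> inv sK
    by simp
  moreover have "0 < \<pi> + \<sigma> - nsm p \<sigma>"
    using small \<pi> \<sigma> nsm_Suc_right[of "p - 1" \<sigma>] two_le_p by (simp add: nsm_Fin algebra_simps)
  ultimately have "r \<in> M"
    unfolding r_def using sK inv by (simp add: val_ideal_iff zero_extended_def)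
  moreover have "s [^] p \<otimes> r = nat_elem p \<otimes> s \<otimes> (s [^] p \<otimes> inv (s [^] p))"
    unfolding r_def using K_subset_carrier[OF inv(1)] K_subset_carrier[OF S(1)] K_subset_carrier[OF sK]
      nat_elem_closed by algebra
  ultimately show ?thesis
    using that \<open>s \<noteq> \<zero>\<close> inv sK K_subset_carrier by simp
qed

lemma is_best_if_one_plus_unit_pth_power:
  assumes u: "u \<in> val_units K v" and s: "s \<in> M" and no_root: "\<not> (\<exists>x\<in>A. u \<ominus> x [^] p \<in> M)"
    and small: "nsm (p - 1) (v s) < v (nat_elem p)"
  shows "is_best L K v p (\<one> \<oplus> u \<otimes> s [^] p)"
proof -
  obtain r where r: "s \<noteq> \<zero>" "r \<in> M" "nat_elem p \<otimes> s = s [^] p \<otimes> r"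
    using exists_factor_if_small[OF s small] .
  have "u \<ominus> x [^] p \<in> M" if x: "x \<in> A" "u \<ominus> (x [^] p \<oplus> r \<otimes> x) \<in> M" for x
  proof -
    have "x \<in> carrier L" "x [^] p \<in> carrier L" "u \<in> carrier L" "r \<in> carrier L"
      using x u r K_subset_carrier by (simp_all add: val_units_def val_ring_iff val_ideal_iff)
    then have "u \<ominus> x [^] p = (u \<ominus> (x [^] p \<oplus> r \<otimes> x)) \<oplus> r \<otimes> x"
      by algebra
    then show ?thesis
      using x r by (simp add: val_ideal_closed)
  qed
  then have "\<not> (\<exists>x\<in>A. u \<ominus> (x [^] p \<oplus> r \<otimes> x) \<in> M)"
    using no_root by blast
  then show ?thesis
    using is_best_if_no_residue_root[OF s r(1) val_ideal_subset_val_ring[OF r(2)] r(3) u] by blast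
qed

lemma primitive_root_in_val_ring:
  assumes \<zeta>: "\<zeta> \<in> K" "primitive_root L p \<zeta>"
  shows "\<zeta> \<in> A" "\<zeta> \<ominus> \<one> \<noteq> \<zero>" "\<zeta> [^] p = \<one>"
proof -
  show \<zeta>p: "\<zeta> [^] p = \<one>"
    using \<zeta>(2) unfolding primitive_root_def by simp
  have "\<zeta> [^] (1::nat) \<noteq> \<one>"
    using \<zeta>(2) two_le_p unfolding primitive_root_def by auto
  moreover have "\<zeta> = (\<zeta> \<ominus> \<one>) \<oplus> \<one>"
    using K_subset_carrier[OF \<zeta>(1)] by algebra
  ultimately show "\<zeta> \<ominus> \<one> \<noteq> \<zero>"
    using K_subset_carrier[OF \<zeta>(1)] by auto
  have "\<zeta> \<noteq> \<zero>"
    using \<zeta>p two_le_p by (auto simp: nat_pow_zero)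
  then obtain a where a: "v \<zeta> = Fin a"
    using v_finite \<zeta>(1) by blast
  have "nsm p a = 0"
    using v_pow[OF \<zeta>(1), of p] \<zeta>p a by (simp add: nsm_Fin zero_extended_def)
  then show "\<zeta> \<in> A"
    using a \<zeta>(1) nsm_eq_0_iff[of p a] two_le_p by (simp add: val_ring_iff zero_extended_def)
qed

lemma primitive_root_minus_one:
  assumes \<zeta>: "\<zeta> \<in> K" "primitive_root L p \<zeta>"
  obtains r where "\<zeta> \<ominus> \<one> \<in> M" "\<zeta> \<ominus> \<one> \<noteq> \<zero>" "r \<in> A"
    "nat_elem p \<otimes> (\<zeta> \<ominus> \<one>) = (\<zeta> \<ominus> \<one>) [^] p \<otimes> r" "r \<oplus> \<one> \<in> M"
proof -
  note \<zeta>' = primitive_root_in_val_ring[OF \<zeta>]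
  define y where "y = \<zeta> \<ominus> \<one>"
  have yA: "y \<in> A" and yc: "y \<in> carrier L"
    unfolding y_def using \<zeta>'(1) val_ring_subset_carrier by simp_all
  obtain w where w: "w \<in> A" "\<zeta> [^] p \<ominus> \<one> = y [^] p \<oplus> nat_elem p \<otimes> y \<otimes> (\<one> \<oplus> y \<otimes> w)"
    using pow_p_minus_one_expansion[OF \<zeta>'(1)] unfolding y_def .
  \<comment> \<open>\<open>y\<^sup>p + p y e = \<zeta>\<^sup>p - 1 = 0\<close> with \<open>e \<equiv> 1\<close>, so \<open>r = -e\<^sup>-\<^sup>1\<close> satisfies \<open>p y = y\<^sup>p r\<close>.\<close>
  define e where "e = \<one> \<oplus> y \<otimes> w"
  have eA: "e \<in> A" and ec: "e \<in> carrier L"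
    unfolding e_def using yA w val_ring_subset_carrier by simp_all
  have "y [^] p \<oplus> nat_elem p \<otimes> y \<otimes> e = \<zero>"
    using w(2) \<zeta>'(3) unfolding e_def by (simp add: a_minus_def r_neg)
  then have ypow: "y [^] p = \<ominus> (nat_elem p \<otimes> y \<otimes> e)"
    using yc ec by (simp add: add.inv_unique' minus_equality)
  then have "y [^] p \<in> M"
    using yA eA nat_elem_p_in_val_ideal by (simp add: val_ideal_closed)
  then have yM: "y \<in> M"
    using val_ideal_if_pow[OF yA, of p] two_le_p by simp
  obtain u where u: "u \<in> A" "u \<otimes> e = \<one>" "u \<ominus> \<one> \<in> M"
    using inv_one_plus_val_ideal[OF val_ideal_mult_right[OF yM w(1)]] unfolding e_def by blast
  have uc: "u \<in> carrier L"
    using u(1) val_ring_subset_carrier by simp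
  have "y [^] p \<otimes> (\<ominus> u) = nat_elem p \<otimes> y \<otimes> (u \<otimes> e)"
    unfolding ypow using yc ec uc nat_elem_closed by algebra
  then have "nat_elem p \<otimes> (\<zeta> \<ominus> \<one>) = (\<zeta> \<ominus> \<one>) [^] p \<otimes> (\<ominus> u)"
    using u(2) yc unfolding y_def by simp
  moreover have "\<ominus> u \<oplus> \<one> = \<ominus> (u \<ominus> \<one>)"
    using uc by algebra
  then have "\<ominus> u \<oplus> \<one> \<in> M"
    using u(3) by (simp add: val_ideal_closed)
  ultimately show ?thesis
    using that[of "\<ominus> u"] yM \<zeta>'(2) u(1) unfolding y_def by simp
qed

lemma is_best_if_one_plus_unit_zeta:
  assumes \<zeta>: "\<zeta> \<in> K" "primitive_root L p \<zeta>" and c: "c \<in> val_units K v"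
    and no_root: "\<not> (\<exists>x\<in>A. c \<ominus> (x [^] p \<ominus> x) \<in> M)"
  shows "is_best L K v p (\<one> \<oplus> c \<otimes> (\<zeta> \<ominus> \<one>) [^] p)"
proof -
  obtain r where r: "\<zeta> \<ominus> \<one> \<in> M" "\<zeta> \<ominus> \<one> \<noteq> \<zero>" "r \<in> A"
    "nat_elem p \<otimes> (\<zeta> \<ominus> \<one>) = (\<zeta> \<ominus> \<one>) [^] p \<otimes> r" "r \<oplus> \<one> \<in> M"
    using primitive_root_minus_one[OF \<zeta>] .
  have "\<not> (\<exists>x\<in>A. c \<ominus> (x [^] p \<oplus> r \<otimes> x) \<in> M)"
  proof
    assume "\<exists>x\<in>A. c \<ominus> (x [^] p \<oplus> r \<otimes> x) \<in> M"
    then obtain x where x: "x \<in> A" "c \<ominus> (x [^] p \<oplus> r \<otimes> x) \<in> M"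
      by blast
    have "x \<in> carrier L" "x [^] p \<in> carrier L" "c \<in> carrier L" "r \<in> carrier L"
      using x c r(3) K_subset_carrier by (simp_all add: val_units_def val_ring_iff)
    then have "c \<ominus> (x [^] p \<ominus> x) = (c \<ominus> (x [^] p \<oplus> r \<otimes> x)) \<oplus> (r \<oplus> \<one>) \<otimes> x"
      by algebra
    then have "c \<ominus> (x [^] p \<ominus> x) \<in> M"
      using x r(5) by (simp add: val_ideal_closed)
    then show False
      using no_root x(1) by blast
  qed
  then show ?thesis
    using is_best_if_no_residue_root[OF r(1,2,3,4) c] by blast
qed

end

theorem corollary3p3p4:
  fixes L :: "('a, 'b) ring_scheme" and K :: "'a set"
    and v :: "'a \<Rightarrow> 'g::linordered_ab_group_add extended"
    and p :: nat and \<zeta> h :: 'a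
  assumes p_prime: "Factorial_Ring.prime p"
    and L_field: "field L" and K_subfield: "subfield K L"
    and v_val: "valuation L K v"
    and hensel: "henselian L K v"
    and not_field: "\<not> subfield (val_ring K v) L"
    and char0: "\<forall>n::nat. 0 < n \<longrightarrow> add_pow L n \<one>\<^bsub>L\<^esub> \<noteq> \<zero>\<^bsub>L\<^esub>"
    and res_char: "\<forall>n::nat. add_pow L n \<one>\<^bsub>L\<^esub> \<in> val_ideal K v \<longleftrightarrow> p dvd n"
    and zeta: "\<zeta> \<in> K" "primitive_root L p \<zeta>"
    and degree: "ring.dimension L p K (carrier L)"
    and hA: "h \<in> val_ring K v"
    and hgen: "generates L K p h"
    and cases:
      "\<not> val_p_divides L K v p h
       \<or> (h \<in> val_units K v \<and> \<not> (\<exists>x \<in> val_ring K v. h \<ominus>\<^bsub>L\<^esub> x [^]\<^bsub>L\<^esub> p \<in> val_ideal K v))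
       \<or> (\<exists>c t. c \<in> val_units K v \<and> t \<in> val_ideal K v \<and>
            h = \<one>\<^bsub>L\<^esub> \<oplus>\<^bsub>L\<^esub> c \<otimes>\<^bsub>L\<^esub> t \<and>
            0 < v t \<and> nsm (p - 1) (v t) < nsm p (v (add_pow L p \<one>\<^bsub>L\<^esub>)) \<and>
            \<not> val_p_divides L K v p t)
       \<or> (\<exists>u s. u \<in> val_units K v \<and> s \<in> val_ideal K v \<and>
            \<not> (\<exists>x \<in> val_ring K v. u \<ominus>\<^bsub>L\<^esub> x [^]\<^bsub>L\<^esub> p \<in> val_ideal K v) \<and>
            h = \<one>\<^bsub>L\<^esub> \<oplus>\<^bsub>L\<^esub> u \<otimes>\<^bsub>L\<^esub> s [^]\<^bsub>L\<^esub> p \<and>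
            0 < v s \<and> nsm (p - 1) (v s) < v (add_pow L p \<one>\<^bsub>L\<^esub>))
       \<or> (\<exists>c. c \<in> val_units K v \<and>
            \<not> (\<exists>x \<in> val_ring K v.
                 c \<ominus>\<^bsub>L\<^esub> (x [^]\<^bsub>L\<^esub> p \<ominus>\<^bsub>L\<^esub> x) \<in> val_ideal K v) \<and>
            h = \<one>\<^bsub>L\<^esub> \<oplus>\<^bsub>L\<^esub> c \<otimes>\<^bsub>L\<^esub> (\<zeta> \<ominus>\<^bsub>L\<^esub> \<one>\<^bsub>L\<^esub>) [^]\<^bsub>L\<^esub> p)"
  shows "is_best L K v p h"
proof -
  interpret mixed_char_valued_subfield L K v p
    using L_field K_subfield v_val p_prime char0 res_char
    by (simp add: mixed_char_valued_subfield_def mixed_char_valued_subfield_axioms_def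
        valued_subfield_def valued_subfield_axioms_def)
  from cases show ?thesis
    by (elim disjE exE conjE)
      (simp_all add: hA is_best_if_not_val_p_divides is_best_if_unit_not_pth_power
        is_best_if_one_plus_small_not_p_divisible is_best_if_one_plus_unit_pth_power
        is_best_if_one_plus_unit_zeta[OF zeta])
qed

end
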